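(* For a coupled relation $\mathcal{R}$ let $\mathcal{R}^C=\left(\mathcal{R}_1^\star,\ \mathcal{R}_2\langle\mathcal{R}_1^\star\rangle\cup\mathcal{R}_1^\star\right)$. Then: (a) for all coupled relations $\mathcal{R},\mathcal{S}$ with $\mathcal{R}\subseteq\mathcal{S}$ and $\mathcal{R}\rightarrowtail\mathcal{S}$, we have $\mathcal{R}^C\subseteq\mathcal{S}^C$ and $\mathcal{R}^C\rightarrowtail\mathcal{S}^C$; (b) if $\mathcal{R}$ is a coupled relation with $\mathcal{R}\rightarrowtail\mathcal{R}^C$, then $\mathcal{R}$ is contained (componentwise) in some call-by-name coupled logical bisimulation; (c) if $\mathcal{R}$ is a call-by-name coupled logical bisimulation, then so is $\mathcal{R}^C$.
   Context: $\Lambda^\bullet$ is the set of closed $\lambda$-terms. Contexts are generated by $C::=x\mid[\cdot]\mid C\,C\mid\lambda x.C$, possibly with several holes numbered left to right; $C[\widetilde M]$ fills the $i$-th hole with $M_i$. For $\mathcal{R}\subseteq\Lambda^\bullet\times\Lambda^\bullet$, $\mathcal{R}^\star=\{(C[\widetilde M],C[\widetilde N]) : C\text{ a context},\ M_i\,\mathcal{R}\,N_i\ \forall i,\ C[\widetilde M],C[\widetilde N]\in\Lambda^\bullet\}$. For relations $\mathcal{R},\mathcal{R}'$ on $\Lambda^\bullet$, $\mathcal{R}\langle\mathcal{R}'\rangle=\{(E M_1\cdots M_k,\ F N_1\cdots N_k) : k\ge0,\ E\,\mathcal{R}\,F,\ M_i\,\mathcal{R}'\,N_i\ \forall i\}$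 (application associating to the left). A coupled relation is a pair $(\mathcal{R}_1,\mathcal{R}_2)$ of relations on $\Lambda^\bullet$ with $\mathcal{R}_1\subseteq\mathcal{R}_2$; inclusion is componentwise. Call-by-name reduction on closed terms: $MN\longrightarrow M'N$ if $M\longrightarrow M'$, and $(\lambda x.P)N\longrightarrow P[N/x]$; $\Longrightarrow$ is its reflexive transitive closure. For coupled relations $\mathcal{R},\mathcal{S}$, $\mathcal{R}\rightarrowtail\mathcal{S}$ holds iff whenever $M\,\mathcal{R}_2\,N$: (i) if $M\longrightarrow M'$ then $N\Longrightarrow N'$ for some $N'$ with $M'\,\mathcal{S}_2\,N'$; (ii) if $M=\lambda x.P$ then $N\Longrightarrow\lambda x.Q$ for some $Q$ such that $P[X/x]\,\mathcal{S}_2\,Q[Y/x]$ for all $X\,\mathcal{R}_1^\star\,Y$; (iii) the same conditions with $M$ and $N$ exchanged. A coupled relation $\mathcal{R}$ is a (call-by-name) coupled logical bisimulation iff $\mathcal{R}\rightarrowtail\mathcal{R}$. *)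

theory Defs
  imports Main
begin

datatype trm = Var nat | App trm trm | Lam trm

fun closedn :: "nat \<Rightarrow> trm \<Rightarrow> bool" where
  "closedn k (Var i) = (i < k)"
| "closedn k (App M N) = (closedn k M \<and> closedn k N)"
| "closedn k (Lam M) = closedn (Suc k) M"

definition closed :: "trm \<Rightarrow> bool" where
  "closed M = closedn 0 M"

fun lift :: "trm \<Rightarrow> nat \<Rightarrow> trm" where
  "lift (Var i) k = (if i < k then Var i else Var (Suc i))"
| "lift (App M N) k = App (lift M k) (lift N k)"
| "lift (Lam M) k = Lam (lift M (Suc k))"

text \<open>subst P N k = P[N/k]: capture-avoiding substitution of N for index k.\<close>
fun subst :: "trm \<Rightarrow> trm \<Rightarrow> nat \<Rightarrow> trm" where
  "subst (Var i) N k = (if i < k then Var i else if i = k then N else Var (i - 1))"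
| "subst (App M M') N k = App (subst M N k) (subst M' N k)"
| "subst (Lam M) N k = Lam (subst M (lift N 0) (Suc k))"

inductive cbn :: "trm \<Rightarrow> trm \<Rightarrow> bool" where
  cbn_app: "cbn M M' \<Longrightarrow> cbn (App M N) (App M' N)"
| cbn_beta: "cbn (App (Lam P) N) (subst P N 0)"

abbreviation cbn_star :: "trm \<Rightarrow> trm \<Rightarrow> bool" where
  "cbn_star \<equiv> cbn\<^sup>*\<^sup>*"

datatype ctx = CVar nat | CHole | CApp ctx ctx | CLam ctx

fun holes :: "ctx \<Rightarrow> nat" where
  "holes (CVar i) = 0"
| "holes CHole = 1"
| "holes (CApp C D) = holes C + holes D"
| "holes (CLam C) = holes C"

text \<open>Fill the holes from left to right with the given terms (which are closed,
  so no lifting is needed under binders).\<close>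
fun fill :: "ctx \<Rightarrow> trm list \<Rightarrow> trm" where
  "fill (CVar i) Ms = Var i"
| "fill CHole Ms = hd Ms"
| "fill (CApp C D) Ms = App (fill C (take (holes C) Ms)) (fill D (drop (holes C) Ms))"
| "fill (CLam C) Ms = Lam (fill C Ms)"

type_synonym rel = "(trm \<times> trm) set"

definition ctx_closure :: "rel \<Rightarrow> rel" where
  "ctx_closure R = {(fill C Ms, fill C Ns) | C Ms Ns.
      length Ms = holes C \<and> length Ns = holes C \<and>
      list_all2 (\<lambda>M N. (M, N) \<in> R) Ms Ns \<and>
      closed (fill C Ms) \<and> closed (fill C Ns)}"

definition apps :: "trm \<Rightarrow> trm list \<Rightarrow> trm" where
  "apps E Ms = foldl App E Ms"

definition app_closure :: "rel \<Rightarrow> rel \<Rightarrow> rel" where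
  "app_closure R R' = {(apps E Ms, apps F Ns) | E F Ms Ns.
      (E, F) \<in> R \<and> list_all2 (\<lambda>M N. (M, N) \<in> R') Ms Ns}"

type_synonym crel = "rel \<times> rel"

definition coupled :: "crel \<Rightarrow> bool" where
  "coupled R \<longleftrightarrow> fst R \<subseteq> snd R \<and> snd R \<subseteq> {(M, N). closed M \<and> closed N}"

definition crel_le :: "crel \<Rightarrow> crel \<Rightarrow> bool" where
  "crel_le R S \<longleftrightarrow> fst R \<subseteq> fst S \<and> snd R \<subseteq> snd S"

definition progress :: "crel \<Rightarrow> crel \<Rightarrow> bool" where
  "progress R S \<longleftrightarrow> (\<forall>M N. (M, N) \<in> snd R \<longrightarrow>
      (\<forall>M'. cbn M M' \<longrightarrow> (\<exists>N'. cbn_star N N' \<and> (M', N') \<in> snd S)) \<and>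
      (\<forall>P. M = Lam P \<longrightarrow> (\<exists>Q. cbn_star N (Lam Q) \<and>
          (\<forall>X Y. (X, Y) \<in> ctx_closure (fst R) \<longrightarrow> (subst P X 0, subst Q Y 0) \<in> snd S))) \<and>
      (\<forall>N'. cbn N N' \<longrightarrow> (\<exists>M'. cbn_star M M' \<and> (M', N') \<in> snd S)) \<and>
      (\<forall>Q. N = Lam Q \<longrightarrow> (\<exists>P. cbn_star M (Lam P) \<and>
          (\<forall>X Y. (X, Y) \<in> ctx_closure (fst R) \<longrightarrow> (subst P X 0, subst Q Y 0) \<in> snd S))))"

definition coupled_logical_bisim :: "crel \<Rightarrow> bool" where
  "coupled_logical_bisim R \<longleftrightarrow> coupled R \<and> progress R R"

definition cclos :: "crel \<Rightarrow> crel" where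
  "cclos R = (ctx_closure (fst R), app_closure (snd R) (ctx_closure (fst R)) \<union> ctx_closure (fst R))"

end

theory Submission
  imports Defs
begin

(* Progression is
   split into a left half and the left half of the converse relations; since the
   closure commutes with converse, it suffices to show that the left half is
   preserved (locale closure_setting):
   - pairs of R1* are handled by induction on the context: a reduction inside a
     context is matched in the same context, except at an R1-pair, where the
     hypothesis on R2 (containing R1) is used; a beta-step between related
     abstractions stays in R1* by a substitution lemma for contexts;
   - pairs of R2<R1*> reduce either at the head, answered by R2 >-> S2 under the
     same arguments, or by a head beta-step, answered by the abstraction clause.
   Part (b) iterates the closure and takes the union of the resulting chain of
   second components; part (c) is part (a) with S = R. *)

section \<open>Contexts as an inductive relation\<close>

text \<open>\<open>ctxr R M N\<close>: N arises from M by replacing some subterms with R-related ones.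
  This is the multi-hole context closure, minus the closedness side condition.\<close>
inductive ctxr :: "rel \<Rightarrow> trm \<Rightarrow> trm \<Rightarrow> bool" for R where
  ctxr_var: "ctxr R (Var i) (Var i)"
| ctxr_base: "(M, N) \<in> R \<Longrightarrow> ctxr R M N"
| ctxr_app: "ctxr R M1 N1 \<Longrightarrow> ctxr R M2 N2 \<Longrightarrow> ctxr R (App M1 M2) (App N1 N2)"
| ctxr_lam: "ctxr R M N \<Longrightarrow> ctxr R (Lam M) (Lam N)"

lemma ctxr_AppE:
  assumes "ctxr R (App A B) N"
  obtains (base) "(App A B, N) \<in> R"
    | (app) C D where "N = App C D" "ctxr R A C" "ctxr R B D"
  using assms by (cases rule: ctxr.cases) auto

lemma ctxr_LamE:
  assumes "ctxr R (Lam P) N"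
  obtains (base) "(Lam P, N) \<in> R"
    | (lam) Q where "N = Lam Q" "ctxr R P Q"
  using assms by (cases rule: ctxr.cases) auto

lemma fill_ctxr:
  "length Ms = holes C \<Longrightarrow> length Ns = holes C \<Longrightarrow> list_all2 (\<lambda>M N. (M, N) \<in> R) Ms Ns
   \<Longrightarrow> ctxr R (fill C Ms) (fill C Ns)"
proof (induction C arbitrary: Ms Ns)
  case CHole
  then obtain m n where "Ms = [m]" "Ns = [n]"
    by (cases Ms; cases Ns) auto
  with CHole.prems show ?case by (auto intro: ctxr_base)
next
  case (CApp C1 C2)
  then show ?case
    by (auto intro!: ctxr_app CApp.IH)
qed (auto intro: ctxr.intros)

lemma ctxr_fill:
  assumes "ctxr R M N"
  shows "\<exists>C Ms Ns. length Ms = holes C \<and> length Ns = holes C \<and>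
     list_all2 (\<lambda>M N. (M, N) \<in> R) Ms Ns \<and> M = fill C Ms \<and> N = fill C Ns"
  using assms
proof (induction rule: ctxr.induct)
  case (ctxr_var i)
  show ?case by (rule exI[of _ "CVar i"]) auto
next
  case (ctxr_base M N)
  then show ?case by (intro exI[of _ CHole] exI[of _ "[M]"] exI[of _ "[N]"]) auto
next
  case (ctxr_app M1 N1 M2 N2)
  then obtain C1 Ms1 Ns1 C2 Ms2 Ns2 where
    "length Ms1 = holes C1" "length Ns1 = holes C1" "list_all2 (\<lambda>M N. (M, N) \<in> R) Ms1 Ns1"
    "M1 = fill C1 Ms1" "N1 = fill C1 Ns1"
    "length Ms2 = holes C2" "length Ns2 = holes C2" "list_all2 (\<lambda>M N. (M, N) \<in> R) Ms2 Ns2"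
    "M2 = fill C2 Ms2" "N2 = fill C2 Ns2"
    by blast
  then show ?case
    by (intro exI[of _ "CApp C1 C2"] exI[of _ "Ms1 @ Ms2"] exI[of _ "Ns1 @ Ns2"])
       (auto intro: list_all2_appendI)
next
  case (ctxr_lam M N)
  then show ?case by (metis fill.simps(4) holes.simps(4))
qed

lemma ctx_closure_iff: "(M, N) \<in> ctx_closure R \<longleftrightarrow> ctxr R M N \<and> closed M \<and> closed N"
  unfolding ctx_closure_def using fill_ctxr ctxr_fill by blast

lemma ctxr_mono: "ctxr R M N \<Longrightarrow> R \<subseteq> S \<Longrightarrow> ctxr S M N"
  by (induction rule: ctxr.induct) (auto intro: ctxr.intros)

lemma ctx_closure_mono: "R \<subseteq> S \<Longrightarrow> ctx_closure R \<subseteq> ctx_closure S"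
  by (auto simp: ctx_closure_iff intro: ctxr_mono)

lemma ctx_closure_idem: "ctx_closure (ctx_closure R) \<subseteq> ctx_closure R"
proof -
  have "ctxr (ctx_closure R) M N \<Longrightarrow> ctxr R M N" for M N
    by (induction rule: ctxr.induct) (auto intro: ctxr.intros simp: ctx_closure_iff)
  then show ?thesis by (auto simp: ctx_closure_iff)
qed

lemma ctxr_converse: "ctxr R M N \<Longrightarrow> ctxr (converse R) N M"
  by (induction rule: ctxr.induct) (auto intro: ctxr.intros)

lemma ctx_closure_converse: "ctx_closure (converse R) = converse (ctx_closure R)"
  using ctxr_converse[of R] ctxr_converse[of "converse R"] by (auto simp: ctx_closure_iff)

section \<open>Closed terms, lifting and substitution\<close>

abbreviation closed_pairs :: rel where
  "closed_pairs \<equiv> {(M, N). closed M \<and> closed N}"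

lemma lift_closed: "closedn k M \<Longrightarrow> k \<le> j \<Longrightarrow> lift M j = M"
  by (induction M arbitrary: k j) auto

lemma subst_closed: "closedn k M \<Longrightarrow> k \<le> j \<Longrightarrow> subst M X j = M"
  by (induction M arbitrary: k j X) auto

lemma closedn_lift: "closedn k M \<Longrightarrow> closedn (Suc k) (lift M j)"
  by (induction M arbitrary: k j) auto

lemma closedn_subst:
  "closedn (Suc k) P \<Longrightarrow> closedn k X \<Longrightarrow> j \<le> k \<Longrightarrow> closedn k (subst P X j)"
  by (induction P arbitrary: k X j) (auto simp: closedn_lift)

lemma cbn_closed: "cbn M M' \<Longrightarrow> closed M \<Longrightarrow> closed M'"
  by (induction rule: cbn.induct) (auto simp: closed_def closedn_subst)

lemma cbn_star_closed: "cbn_star M M' \<Longrightarrow> closed M \<Longrightarrow> closed M'"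
  by (induction rule: rtranclp_induct) (auto simp: cbn_closed)

text \<open>Since R relates closed terms only, lifting and substitution act on the R-pairs
  trivially, so they preserve \<open>ctxr R\<close>.\<close>
lemma ctxr_lift:
  assumes "R \<subseteq> closed_pairs"
  shows "ctxr R X Y \<Longrightarrow> ctxr R (lift X j) (lift Y j)"
proof (induction arbitrary: j rule: ctxr.induct)
  case (ctxr_base M N)
  then have "closedn 0 M" "closedn 0 N" using assms by (auto simp: closed_def)
  then show ?case using ctxr_base by (simp add: lift_closed[of 0] ctxr.ctxr_base)
qed (auto intro: ctxr.intros)

lemma ctxr_subst:
  assumes "R \<subseteq> closed_pairs"
  shows "ctxr R P Q \<Longrightarrow> ctxr R X Y \<Longrightarrow> ctxr R (subst P X k) (subst Q Y k)"
proof (induction arbitrary: X Y k rule: ctxr.induct)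
  case (ctxr_base M N)
  then have "closedn 0 M" "closedn 0 N" using assms by (auto simp: closed_def)
  then show ?case using ctxr_base by (simp add: subst_closed[of 0] ctxr.ctxr_base)
next
  case (ctxr_lam M N)
  then show ?case using assms by (simp add: ctxr.ctxr_lam ctxr_lift)
qed (auto intro: ctxr.intros)

lemma apps_Nil [simp]: "apps E [] = E"
  by (simp add: apps_def)

lemma apps_Cons [simp]: "apps E (m # ms) = apps (App E m) ms"
  by (simp add: apps_def)

lemma closedn_apps: "closedn k (apps E Ms) \<longleftrightarrow> closedn k E \<and> (\<forall>m\<in>set Ms. closedn k m)"
  by (induction Ms arbitrary: E) auto

lemma apps_Lam: "apps E Ms = Lam P \<Longrightarrow> Ms = [] \<and> E = Lam P"
  by (induction Ms arbitrary: E) auto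

lemma cbn_apps: "cbn A B \<Longrightarrow> cbn (apps A ns) (apps B ns)"
  by (induction ns arbitrary: A B) (auto intro: cbn_app)

lemma cbn_star_apps: "cbn_star A B \<Longrightarrow> cbn_star (apps A ns) (apps B ns)"
  by (induction rule: rtranclp_induct) (auto intro: rtranclp.rtrancl_into_rtrancl cbn_apps)

lemma cbn_apps_cases:
  assumes "cbn (apps E Ms) M'"
  obtains (head) E' where "cbn E E'" "M' = apps E' Ms"
    | (beta) P m ms where "E = Lam P" "Ms = m # ms" "M' = apps (subst P m 0) ms"
  using assms
proof (induction Ms arbitrary: E thesis)
  case Nil
  then show ?case by simp
next
  case (Cons m ms)
  have step: "cbn (apps (App E m) ms) M'" using Cons.prems(3) by simp
  show ?case
  proof (rule Cons.IH[OF _ _ step])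
    fix E' assume E': "cbn (App E m) E'" "M' = apps E' ms"
    from E'(1) show thesis
      by (cases rule: cbn.cases) (use E'(2) Cons.prems(1,2) in auto)
  qed simp
qed

lemma app_closureI:
  "(E, F) \<in> R \<Longrightarrow> list_all2 (\<lambda>M N. (M, N) \<in> R') Ms Ns \<Longrightarrow> (apps E Ms, apps F Ns) \<in> app_closure R R'"
  unfolding app_closure_def by blast

lemma app_closureE:
  assumes "(M, N) \<in> app_closure R R'"
  obtains E F Ms Ns where "M = apps E Ms" "N = apps F Ns" "(E, F) \<in> R"
    "list_all2 (\<lambda>M N. (M, N) \<in> R') Ms Ns"
  using assms unfolding app_closure_def by blast

lemma app_closure_base: "R \<subseteq> app_closure R R'"
  using app_closureI[where Ms = "[]" and Ns = "[]"] by auto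

lemma app_closure_snoc:
  assumes "(A, C) \<in> app_closure R R'" "(B, D) \<in> R'"
  shows "(App A B, App C D) \<in> app_closure R R'"
proof -
  obtain E F Ms Ns where "A = apps E Ms" "C = apps F Ns" "(E, F) \<in> R"
    "list_all2 (\<lambda>M N. (M, N) \<in> R') Ms Ns"
    using assms(1) by (rule app_closureE)
  then show ?thesis
    using app_closureI[where Ms = "Ms @ [B]" and Ns = "Ns @ [D]"] assms(2)
    by (simp add: apps_def list_all2_appendI)
qed

text \<open>The applicative closure commutes with converse (needed to swap the halves).\<close>
lemma app_closure_converse_le:
  "converse (app_closure R R') \<subseteq> app_closure (converse R) (converse R')"
proof (rule subrelI)
  fix M N assume "(M, N) \<in> converse (app_closure R R')"
  then obtain E F Ms Ns where MN: "N = apps E Ms" "M = apps F Ns" "(E, F) \<in> R"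
    and args: "list_all2 (\<lambda>M N. (M, N) \<in> R') Ms Ns"
    by (auto elim: app_closureE)
  from args have "list_all2 (\<lambda>M N. (M, N) \<in> converse R') Ns Ms"
    by (simp add: list_all2_conv_all_nth)
  with MN show "(M, N) \<in> app_closure (converse R) (converse R')"
    by (simp add: app_closureI)
qed

lemma app_closure_converse:
  "app_closure (converse R) (converse R') = converse (app_closure R R')"
  using app_closure_converse_le[of R R'] app_closure_converse_le[of "converse R" "converse R'"]
  by auto

lemma app_closure_mono: "R \<subseteq> S \<Longrightarrow> R' \<subseteq> S' \<Longrightarrow> app_closure R R' \<subseteq> app_closure S S'"
  unfolding app_closure_def by (fastforce elim: list_all2_mono)

lemma app_closure_closed:
  assumes "R \<subseteq> closed_pairs" "R' \<subseteq> closed_pairs"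
  shows "app_closure R R' \<subseteq> closed_pairs"
proof (rule subrelI)
  fix M N assume "(M, N) \<in> app_closure R R'"
  then obtain E F Ms Ns where MN: "M = apps E Ms" "N = apps F Ns" "(E, F) \<in> R"
    "list_all2 (\<lambda>M N. (M, N) \<in> R') Ms Ns"
    by (rule app_closureE)
  then have "\<forall>m\<in>set Ms. closed m" "\<forall>n\<in>set Ns. closed n"
    using assms(2) by (fastforce simp: list_all2_conv_all_nth in_set_conv_nth)+
  then show "(M, N) \<in> closed_pairs"
    using MN assms(1) by (auto simp: closed_def closedn_apps)
qed

section \<open>One-sided progression\<close>

definition arg_compat :: "rel \<Rightarrow> rel \<Rightarrow> trm \<Rightarrow> trm \<Rightarrow> bool" where
  "arg_compat R1 S2 P Q \<longleftrightarrow>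
     (\<forall>X Y. (X, Y) \<in> ctx_closure R1 \<longrightarrow> (subst P X 0, subst Q Y 0) \<in> S2)"

text \<open>The clauses (i) and (ii) of progression, for one pair, from left to right.\<close>
definition sim_pair :: "rel \<Rightarrow> rel \<Rightarrow> trm \<Rightarrow> trm \<Rightarrow> bool" where
  "sim_pair R1 S2 M N \<longleftrightarrow>
     (\<forall>M'. cbn M M' \<longrightarrow> (\<exists>N'. cbn_star N N' \<and> (M', N') \<in> S2)) \<and>
     (\<forall>P. M = Lam P \<longrightarrow> (\<exists>Q. cbn_star N (Lam Q) \<and> arg_compat R1 S2 P Q))"

definition simulates :: "crel \<Rightarrow> crel \<Rightarrow> bool" where
  "simulates R S \<longleftrightarrow> (\<forall>(M, N) \<in> snd R. sim_pair (fst R) (snd S) M N)"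

text \<open>Componentwise converse; it exchanges the two halves of progression.\<close>
definition flip :: "crel \<Rightarrow> crel" where
  "flip R = (converse (fst R), converse (snd R))"

lemma arg_compat_mono:
  "arg_compat R1 S2 P Q \<Longrightarrow> ctx_closure R1' \<subseteq> ctx_closure R1 \<Longrightarrow> S2 \<subseteq> S2'
   \<Longrightarrow> arg_compat R1' S2' P Q"
  unfolding arg_compat_def by blast

lemma sim_pair_mono:
  assumes "sim_pair R1 S2 M N" "R1' \<subseteq> R1" "S2 \<subseteq> S2'"
  shows "sim_pair R1' S2' M N"
proof -
  have "arg_compat R1 S2 P Q \<Longrightarrow> arg_compat R1' S2' P Q" for P Q
    using arg_compat_mono ctx_closure_mono assms(2,3) by blast
  then show ?thesis
    using assms(1,3) unfolding sim_pair_def by blast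
qed

lemma arg_compat_converse:
  "arg_compat (converse R1) (converse S2) Q P \<longleftrightarrow> arg_compat R1 S2 P Q"
  unfolding arg_compat_def ctx_closure_converse by blast

lemma progress_pointwise:
  "progress R S \<longleftrightarrow> (\<forall>(M, N) \<in> snd R.
      sim_pair (fst R) (snd S) M N \<and> sim_pair (converse (fst R)) (converse (snd S)) N M)"
  unfolding progress_def sim_pair_def arg_compat_converse
  by (auto simp: arg_compat_def)

lemma progress_iff_simulates:
  "progress R S \<longleftrightarrow> simulates R S \<and> simulates (flip R) (flip S)"
  unfolding progress_pointwise simulates_def flip_def by auto

text \<open>Bodies related in R1* under contexts are argument compatible into R1*:
  the substitution lemma, plus preservation of closedness.\<close>
lemma arg_compat_ctxr:
  assumes "R1 \<subseteq> closed_pairs" "ctxr R1 P Q" "closed (Lam P)" "closed (Lam Q)"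
  shows "arg_compat R1 (ctx_closure R1) P Q"
  unfolding arg_compat_def
proof (intro allI impI)
  fix X Y assume "(X, Y) \<in> ctx_closure R1"
  then have XY: "ctxr R1 X Y" "closed X" "closed Y" by (auto simp: ctx_closure_iff)
  then have "closed (subst P X 0)" "closed (subst Q Y 0)"
    using assms(3,4) by (auto simp: closed_def closedn_subst)
  then show "(subst P X 0, subst Q Y 0) \<in> ctx_closure R1"
    using ctxr_subst[OF assms(1,2) XY(1)] by (simp add: ctx_closure_iff)
qed

section \<open>The closure preserves one-sided progression\<close>

text \<open>T is the second
  component of the closure of S.\<close>
locale closure_setting =
  fixes R1 R2 S1 S2 :: rel
  assumes R1_closed: "R1 \<subseteq> closed_pairs"
    and R1_R2: "R1 \<subseteq> R2"
    and R1_S1: "R1 \<subseteq> S1"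
    and sim: "\<And>M N. (M, N) \<in> R2 \<Longrightarrow> sim_pair R1 S2 M N"
begin

abbreviation T :: rel where
  "T \<equiv> app_closure S2 (ctx_closure S1) \<union> ctx_closure S1"

lemma R2_step: "(M, N) \<in> R2 \<Longrightarrow> cbn M M' \<Longrightarrow> \<exists>N'. cbn_star N N' \<and> (M', N') \<in> S2"
  using sim unfolding sim_pair_def by blast

lemma R2_lam: "(Lam P, N) \<in> R2 \<Longrightarrow> \<exists>Q. cbn_star N (Lam Q) \<and> arg_compat R1 S2 P Q"
  using sim unfolding sim_pair_def by blast

text \<open>Argument compatibility into S2 lifts to the closures, since R1** = R1*.\<close>
lemma arg_compat_T:
  assumes "arg_compat R1 S2 P Q"
  shows "arg_compat (ctx_closure R1) T P Q"
  using arg_compat_mono[OF assms ctx_closure_idem] app_closure_base[of S2 "ctx_closure S1"]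
  by blast

text \<open>A step inside an R1-context is matched either by a step inside the same
  context, or, when it happens at an R1-pair, by a pair of S2<S1*>.\<close>
lemma ctxr_step:
  "cbn M M' \<Longrightarrow> ctxr R1 M N \<Longrightarrow> closed M \<Longrightarrow> closed N \<Longrightarrow>
   \<exists>N'. cbn_star N N' \<and> ((M', N') \<in> app_closure S2 (ctx_closure S1) \<or> ctxr R1 M' N')"
proof (induction arbitrary: N rule: cbn.induct)
  case (cbn_app A A' B N)
  from cbn_app.prems(1) show ?case
  proof (cases rule: ctxr_AppE)
    case base
    then show ?thesis
      using R2_step R1_R2 cbn.cbn_app[OF cbn_app.hyps] app_closure_base by blast
  next
    case (app C D)
    have closed: "closed A" "closed B" "closed C" "closed D"
      using cbn_app.prems app(1) by (auto simp: closed_def)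
    obtain C' where C': "cbn_star C C'"
      "(A', C') \<in> app_closure S2 (ctx_closure S1) \<or> ctxr R1 A' C'"
      using cbn_app.IH[OF app(2) closed(1,3)] by blast
    have "(B, D) \<in> ctx_closure S1"
      using app(3) closed R1_S1 by (auto simp: ctx_closure_iff intro: ctxr_mono)
    then have "(App A' B, App C' D) \<in> app_closure S2 (ctx_closure S1) \<or> ctxr R1 (App A' B) (App C' D)"
      using C'(2) app_closure_snoc app(3) ctxr.ctxr_app by blast
    moreover have "cbn_star N (App C' D)"
      using cbn_star_apps[OF C'(1), of "[D]"] app(1) by simp
    ultimately show ?thesis by blast
  qed
next
  case (cbn_beta P B N)
  from cbn_beta.prems(1) show ?case
  proof (cases rule: ctxr_AppE)
    case base
    then show ?thesis
      using R2_step R1_R2 cbn.cbn_beta app_closure_base by blast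
  next
    case (app C D)
    have BD: "(B, D) \<in> ctx_closure R1"
      using cbn_beta.prems app by (auto simp: closed_def ctx_closure_iff)
    from app(2) show ?thesis
    proof (cases rule: ctxr_LamE)
      case base
      then obtain Q where Q: "cbn_star C (Lam Q)" "arg_compat R1 S2 P Q"
        using R2_lam R1_R2 by blast
      have "cbn_star N (subst Q D 0)"
        using cbn_star_apps[OF Q(1), of "[D]"] app(1)
        by (simp add: rtranclp.rtrancl_into_rtrancl cbn.cbn_beta)
      then show ?thesis
        using Q(2) BD app_closure_base unfolding arg_compat_def by blast
    next
      case (lam Q)
      have "cbn_star N (subst Q D 0)"
        using app(1) lam(1) by (simp add: cbn.cbn_beta r_into_rtranclp)
      moreover have "ctxr R1 (subst P B 0) (subst Q D 0)"
        using ctxr_subst[OF R1_closed lam(2) app(3)] .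
      ultimately show ?thesis by blast
    qed
  qed
qed

lemma ctx_closure_step:
  assumes "(M, N) \<in> ctx_closure R1" "cbn M M'"
  shows "\<exists>N'. cbn_star N N' \<and> (M', N') \<in> T"
proof -
  have MN: "ctxr R1 M N" "closed M" "closed N"
    using assms(1) by (auto simp: ctx_closure_iff)
  then obtain N' where N': "cbn_star N N'"
    "(M', N') \<in> app_closure S2 (ctx_closure S1) \<or> ctxr R1 M' N'"
    using ctxr_step[OF assms(2)] by blast
  have "closed M'" "closed N'"
    using cbn_closed[OF assms(2) MN(2)] cbn_star_closed[OF N'(1) MN(3)] .
  then have "(M', N') \<in> T"
    using N'(2) R1_S1 by (auto simp: ctx_closure_iff intro: ctxr_mono)
  with N'(1) show ?thesis by blast
qed

lemma ctx_closure_lam: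
  assumes "(Lam P, N) \<in> ctx_closure R1"
  shows "\<exists>Q. cbn_star N (Lam Q) \<and> arg_compat (ctx_closure R1) T P Q"
proof -
  have PN: "ctxr R1 (Lam P) N" "closed (Lam P)" "closed N"
    using assms by (auto simp: ctx_closure_iff)
  from PN(1) show ?thesis
  proof (cases rule: ctxr_LamE)
    case base
    then show ?thesis using R2_lam R1_R2 arg_compat_T by blast
  next
    case (lam Q)
    have "arg_compat R1 (ctx_closure R1) P Q"
      using arg_compat_ctxr[OF R1_closed lam(2)] PN(2,3) lam(1) by simp
    then have "arg_compat (ctx_closure R1) T P Q"
      using arg_compat_mono[OF _ ctx_closure_idem] ctx_closure_mono[OF R1_S1] by blast
    then show ?thesis using lam(1) by blast
  qed
qed

text \<open>In \<open>E M1 \<dots> Mk\<close>, a head step is answered by R2 \<rightarrowtail> S2; a head beta-step by the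
  abstraction clause, the first arguments being R1*-related.\<close>
lemma app_closure_step:
  assumes "(M, N) \<in> app_closure R2 (ctx_closure R1)" "cbn M M'"
  shows "\<exists>N'. cbn_star N N' \<and> (M', N') \<in> T"
proof -
  obtain E F Ms Ns where EF: "M = apps E Ms" "N = apps F Ns" "(E, F) \<in> R2"
    and args: "list_all2 (\<lambda>M N. (M, N) \<in> ctx_closure R1) Ms Ns"
    using assms(1) by (rule app_closureE)
  have args_S1: "list_all2 (\<lambda>M N. (M, N) \<in> ctx_closure S1) Ms Ns"
    using args ctx_closure_mono[OF R1_S1] by (auto elim: list_all2_mono)
  from assms(2)[unfolded EF(1)] show ?thesis
  proof (cases rule: cbn_apps_cases)
    case (head E')
    then obtain F' where F': "cbn_star F F'" "(E', F') \<in> S2"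
      using R2_step EF(3) by blast
    then have "(M', apps F' Ns) \<in> T"
      using head(2) app_closureI args_S1 by blast
    then show ?thesis
      using EF(2) cbn_star_apps[OF F'(1)] by blast
  next
    case (beta P m ms)
    then obtain n ns where Ns: "Ns = n # ns" "(m, n) \<in> ctx_closure R1"
      "list_all2 (\<lambda>M N. (M, N) \<in> ctx_closure S1) ms ns"
      using args args_S1 by (cases Ns) auto
    obtain Q where Q: "cbn_star F (Lam Q)" "arg_compat R1 S2 P Q"
      using R2_lam EF(3) beta(1) by blast
    have "cbn_star N (apps (App (Lam Q) n) ns)"
      using cbn_star_apps[OF Q(1), of Ns] EF(2) Ns(1) by simp
    then have "cbn_star N (apps (subst Q n 0) ns)"
      by (meson cbn.cbn_beta cbn_apps rtranclp.rtrancl_into_rtrancl)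
    moreover have "(M', apps (subst Q n 0) ns) \<in> T"
      using Q(2) Ns(2,3) beta(3) app_closureI unfolding arg_compat_def by blast
    ultimately show ?thesis by blast
  qed
qed

lemma app_closure_lam:
  assumes "(Lam P, N) \<in> app_closure R2 (ctx_closure R1)"
  shows "\<exists>Q. cbn_star N (Lam Q) \<and> arg_compat (ctx_closure R1) T P Q"
proof -
  obtain E F Ms Ns where EF: "Lam P = apps E Ms" "N = apps F Ns" "(E, F) \<in> R2"
    and args: "list_all2 (\<lambda>M N. (M, N) \<in> ctx_closure R1) Ms Ns"
    using assms by (rule app_closureE)
  then have "E = Lam P" "N = F" using apps_Lam[OF EF(1)[symmetric]] by auto
  then show ?thesis using R2_lam EF(3) arg_compat_T by blast
qed

theorem simulates_cclos: "simulates (cclos (R1, R2)) (cclos (S1, S2))"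
  unfolding simulates_def sim_pair_def cclos_def
  using ctx_closure_step ctx_closure_lam app_closure_step app_closure_lam by auto

end

lemma cclos_flip: "cclos (flip R) = flip (cclos R)"
  unfolding cclos_def flip_def by (simp add: ctx_closure_converse app_closure_converse converse_Un)

lemma simulates_cclos_coupled:
  assumes "coupled R" "crel_le R S" "simulates R S"
  shows "simulates (cclos R) (cclos S)"
proof -
  interpret closure_setting "fst R" "snd R" "fst S" "snd S"
    using assms unfolding coupled_def crel_le_def simulates_def by unfold_locales auto
  show ?thesis using simulates_cclos by simp
qed

text \<open>Part (a), progression: apply the one-sided result to R, S and to their converses.\<close>
lemma progress_cclos:
  assumes "coupled R" "crel_le R S" "progress R S"
  shows "progress (cclos R) (cclos S)"
proof -
  have "coupled (flip R)" "crel_le (flip R) (flip S)"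
    using assms(1,2) unfolding coupled_def crel_le_def flip_def by auto
  then have "simulates (cclos (flip R)) (cclos (flip S))"
    using simulates_cclos_coupled assms(3) unfolding progress_iff_simulates by blast
  moreover have "simulates (cclos R) (cclos S)"
    using simulates_cclos_coupled assms unfolding progress_iff_simulates by blast
  ultimately show ?thesis
    unfolding progress_iff_simulates cclos_flip by blast
qed

lemma crel_le_cclos:
  assumes "crel_le R S"
  shows "crel_le (cclos R) (cclos S)"
proof -
  have "ctx_closure (fst R) \<subseteq> ctx_closure (fst S)"
    using assms ctx_closure_mono unfolding crel_le_def by blast
  moreover have "app_closure (snd R) (ctx_closure (fst R)) \<subseteq> app_closure (snd S) (ctx_closure (fst S))"
    using assms calculation app_closure_mono unfolding crel_le_def by blast
  ultimately show ?thesis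
    unfolding crel_le_def cclos_def by auto
qed

lemma coupled_cclos:
  assumes "coupled R"
  shows "coupled (cclos R)"
proof -
  have "snd R \<subseteq> closed_pairs" "ctx_closure (fst R) \<subseteq> closed_pairs"
    using assms by (auto simp: coupled_def ctx_closure_iff)
  then show ?thesis
    using app_closure_closed unfolding coupled_def cclos_def by auto
qed

text \<open>The closure is extensive: R1 \<subseteq> R1* uses that R1 relates closed terms.\<close>
lemma le_cclos: "coupled R \<Longrightarrow> crel_le R (cclos R)"
  unfolding coupled_def crel_le_def cclos_def
  using app_closure_base by (fastforce simp: ctx_closure_iff intro: ctxr_base)

lemma progress_chain_union:
  assumes progress_C: "\<And>n. progress (C n) (C (Suc n))" and R1_C: "\<And>n. R1 \<subseteq> fst (C n)"
  defines "B \<equiv> (R1, \<Union>n. snd (C n))"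
  shows "progress B B"
  unfolding progress_pointwise
proof (safe)
  fix M N assume "(M, N) \<in> snd B"
  then obtain n where "(M, N) \<in> snd (C n)" unfolding B_def by auto
  then have left: "sim_pair (fst (C n)) (snd (C (Suc n))) M N"
    and right: "sim_pair (converse (fst (C n))) (converse (snd (C (Suc n)))) N M"
    using progress_C[of n] unfolding progress_pointwise by auto
  have target: "snd (C (Suc n)) \<subseteq> snd B"
    unfolding B_def by auto
  show "sim_pair (fst B) (snd B) M N"
    using sim_pair_mono[OF left R1_C target] unfolding B_def by simp
  show "sim_pair (converse (fst B)) (converse (snd B)) N M"
    using sim_pair_mono[OF right] R1_C target by (simp add: B_def converse_mono)
qed

text \<open>Part (b): iterate the closure; all iterates progress to the next one, so the
  union of their second components, with first component R1, is a bisimulation.\<close>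
lemma bisim_up_to_cclos:
  assumes cR: "coupled R" and pR: "progress R (cclos R)"
  shows "\<exists>B. coupled_logical_bisim B \<and> crel_le R B"
proof -
  define C where "C n = (cclos ^^ n) R" for n
  have C_Suc: "C (Suc n) = cclos (C n)" for n by (simp add: C_def)
  have coupled_C: "coupled (C n)" for n
    by (induction n) (simp_all add: C_def cR coupled_cclos)
  have le_C: "crel_le (C n) (C (Suc n))" for n
    using le_cclos[OF coupled_C] by (simp add: C_Suc)
  have progress_C: "progress (C n) (C (Suc n))" for n
    by (induction n) (use pR progress_cclos coupled_C le_C in \<open>auto simp: C_def\<close>)
  have fst_R: "fst R \<subseteq> fst (C n)" for n
    by (induction n) (use le_C in \<open>auto simp: C_def crel_le_def\<close>)
  define B where "B = (fst R, \<Union>n. snd (C n))"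
  have "progress B B"
    using progress_chain_union[of C "fst R", OF progress_C fst_R] by (simp add: B_def)
  moreover have R_B: "snd R \<subseteq> snd B"
    using UN_upper[of 0 UNIV "\<lambda>n. snd (C n)"] unfolding B_def C_def by simp
  then have "crel_le R B"
    unfolding crel_le_def B_def by simp
  moreover have "coupled B"
    using cR R_B coupled_C unfolding coupled_def B_def by auto
  ultimately show ?thesis
    unfolding coupled_logical_bisim_def by blast
qed

theorem mainTheorem6:
  shows "(\<forall>R S. coupled R \<and> coupled S \<and> crel_le R S \<and> progress R S \<longrightarrow>
             crel_le (cclos R) (cclos S) \<and> progress (cclos R) (cclos S))
       \<and> (\<forall>R. coupled R \<and> progress R (cclos R) \<longrightarrow>
             (\<exists>B. coupled_logical_bisim B \<and> crel_le R B))
       \<and> (\<forall>R. coupled_logical_bisim R \<longrightarrow> coupled_logical_bisim (cclos R))"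
proof (intro conjI allI impI)
  fix R S assume "coupled R \<and> coupled S \<and> crel_le R S \<and> progress R S"
  then show "crel_le (cclos R) (cclos S)" "progress (cclos R) (cclos S)"
    by (simp_all add: crel_le_cclos progress_cclos)
next
  fix R assume "coupled R \<and> progress R (cclos R)"
  then show "\<exists>B. coupled_logical_bisim B \<and> crel_le R B"
    using bisim_up_to_cclos by blast
next
  fix R assume "coupled_logical_bisim R"
  moreover have "crel_le R R" by (simp add: crel_le_def)
  ultimately show "coupled_logical_bisim (cclos R)"
    unfolding coupled_logical_bisim_def using coupled_cclos progress_cclos by blast
qed

end
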